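(* For every $r\ge1$, $C_{1,r}=\dfrac{(-1)^r}{r+1}$; equivalently \[ \sum_{\substack{(n_1,\dots,n_r)\in\mathbb Z_{\ge0}^r\\ n_1+\dots+n_r=r\\ n_{j+1}+\dots+n_r\le r-j\ (1\le j<r)}}\ \prod_{j=1}^r\frac{B_{n_j}}{n_j!}=\frac{1}{r+1}. \]
   Context: Bernoulli numbers $B_n$ are defined by $\sum_{n\ge0}B_n x^n/n! = xe^x/(e^x-1)$ (so $B_1=+1/2$). For a finite set $S\subset\mathbb Z_{\ge0}^r$, $C(S)=(-1)^r\sum_{(n_1,\dots,n_r)\in S}\prod_{j}B_{n_j}/n_j!$. For $1\le i\le r$, $C_{i,r}=C(S)$ where $S$ is the set of $(n_1,\dots,n_r)\in\mathbb Z_{\ge0}^r$ with $n_1+\dots+n_r=r$, $n_1+\dots+n_j<j$ for $1\le j<i$, and $n_{j+1}+\dots+n_r\le r-j$ for $i\le j<r$. (So $C_{1,r}$ is given by the set displayed in the claim.) *)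

theory Defs
  imports "HOL-Analysis.Analysis" "HOL-Computational_Algebra.Formal_Power_Series"
begin

text \<open>Bernoulli numbers with B_1 = +1/2, defined by the exponential generating
  function x e^x / (e^x - 1), as a formal power series over the reals.\<close>
definition bernoulli_egf :: "real fps" where
  "bernoulli_egf = fps_X * fps_exp 1 / (fps_exp 1 - 1)"

definition bernoulli :: "nat \<Rightarrow> real" where
  "bernoulli n = fact n * fps_nth bernoulli_egf n"

text \<open>Tuples (n_1,...,n_r) in Z_{>=0}^r are represented as functions
  nat => nat that vanish outside {1..r}.\<close>
definition tuples :: "nat \<Rightarrow> (nat \<Rightarrow> nat) set" where
  "tuples r = {n. \<forall>j. j \<notin> {1..r} \<longrightarrow> n j = 0}"

definition Cset :: "nat \<Rightarrow> (nat \<Rightarrow> nat) set \<Rightarrow> real" where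
  "Cset r S = (-1) ^ r * (\<Sum>n\<in>S. \<Prod>j=1..r. bernoulli (n j) / fact (n j))"

definition Cset_index :: "nat \<Rightarrow> nat \<Rightarrow> (nat \<Rightarrow> nat) set" where
  "Cset_index i r = {n \<in> tuples r.
      (\<Sum>j=1..r. n j) = r \<and>
      (\<forall>j. 1 \<le> j \<and> j < i \<longrightarrow> (\<Sum>k=1..j. n k) < j) \<and>
      (\<forall>j. i \<le> j \<and> j < r \<longrightarrow> (\<Sum>k=j+1..r. n k) \<le> r - j)}"

definition C_ir :: "nat \<Rightarrow> nat \<Rightarrow> real" where
  "C_ir i r = Cset r (Cset_index i r)"

end

theory Submission
  imports Defs
begin

text \<open>
  For a power series f with f_0 = 1, summing f_(n_1) \<cdots> f_(n_m) over the tuples of total s \<le> m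
  whose suffix sums are bounded by the suffix lengths gives (m + 1 - s)/(m + 1) \<cdot> [x^s] f^(m+1),
  an identity of cycle-lemma type. It follows by induction on m, peeling off the first entry: the
  factor (N - t)/N turns the resulting convolution into a coefficient of f \<cdot> (N f^N - x (f^N)'),
  and (N + 1) f (f^N)' = N (f^(N+1))'.
  For the Bernoulli generating function \<phi> and m = s = r the sum is [x^r] \<phi>^(r+1) / (r + 1), and
  [x^r] \<phi>^(r+1) = 1 because the Riccati equation x \<phi>' = \<phi> (1 + x - \<phi>) makes [x^n] \<phi>^(n+1)
  independent of n.
\<close>

unbundle no vec_syntax
unbundle fps_syntax

lemma fps_X_times_deriv_nth: "(fps_X * fps_deriv f) $ n = of_nat n * f $ n"
  by (cases n) (simp_all add: mult.commute)

lemma fps_nth_of_nat_times: "(of_nat k * f) $ n = of_nat k * f $ n"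
  by (simp only: fps_of_nat[symmetric] fps_mult_left_const_nth)

lemma fps_X_times_deriv_power_Suc:
  fixes f :: "'a::comm_semiring_1 fps"
  shows "fps_X * fps_deriv (f ^ Suc n) = of_nat (Suc n) * f ^ n * (fps_X * fps_deriv f)"
  by (simp add: fps_deriv_power' ac_simps del: power_Suc of_nat_Suc)

lemma fps_times_deriv_power:
  fixes f :: "'a::comm_semiring_1 fps"
  shows "of_nat (Suc N) * (f * fps_deriv (f ^ N)) = of_nat N * fps_deriv (f ^ Suc N)"
proof (cases N)
  case (Suc M)
  show ?thesis
    unfolding Suc fps_deriv_power' diff_Suc_1 by (simp only: power_Suc ac_simps)
qed simp

lemma fps_nth_power_Suc_self:
  fixes f :: "'a::field_char_0 fps"
  assumes f0: "f $ 0 = 1" and ode: "fps_X * fps_deriv f = f * (1 + fps_X - f)"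
  shows "(f ^ Suc n) $ n = 1"
proof (induction n)
  case 0
  then show ?case by (simp add: f0)
next
  case (Suc n)
  let ?g = "f ^ Suc n"
  have "of_nat (Suc n) * ?g $ Suc n = (fps_X * fps_deriv ?g) $ Suc n"
    by (simp only: fps_X_times_deriv_nth)
  also have "\<dots> = (of_nat (Suc n) * (?g + fps_X * ?g - f * ?g)) $ Suc n"
    by (simp only: fps_X_times_deriv_power_Suc ode) (simp add: algebra_simps)
  also have "\<dots> = of_nat (Suc n) * (?g $ Suc n + ?g $ n - (f * ?g) $ Suc n)"
    by (simp del: power_Suc add: fps_of_nat[symmetric])
  finally have "(f * ?g) $ Suc n = ?g $ n"
    by (simp del: of_nat_Suc power_Suc add: algebra_simps)
  with Suc.IH show ?case by (simp del: power_Suc add: power_Suc[symmetric])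
qed

lemma fps_nth_times_power_minus_deriv:
  fixes f :: "'a::field_char_0 fps"
  shows "(f * (of_nat N * f ^ N - fps_X * fps_deriv (f ^ N))) $ s =
    of_nat N * (of_nat (Suc N) - of_nat s) / of_nat (Suc N) * (f ^ Suc N) $ s"
proof -
  have "of_nat (Suc N) * (f * (fps_X * fps_deriv (f ^ N))) $ s
      = (of_nat N * (fps_X * fps_deriv (f ^ Suc N))) $ s"
    by (simp only: fps_nth_of_nat_times[symmetric] mult.left_commute[of f fps_X]
        mult.left_commute[of _ fps_X] fps_times_deriv_power)
  also have "\<dots> = of_nat N * of_nat s * (f ^ Suc N) $ s"
    by (simp only: fps_nth_of_nat_times fps_X_times_deriv_nth mult.assoc)
  finally have deriv_part:
    "(f * (fps_X * fps_deriv (f ^ N))) $ s =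
      of_nat N * of_nat s / of_nat (Suc N) * (f ^ Suc N) $ s"
    by (simp del: of_nat_Suc add: field_simps)
  have "f * (of_nat N * f ^ N - fps_X * fps_deriv (f ^ N)) =
      of_nat N * f ^ Suc N - f * (fps_X * fps_deriv (f ^ N))"
    by (simp only: right_diff_distrib mult.left_commute[of f] power_Suc)
  then show ?thesis
    by (simp only: fps_sub_nth fps_nth_of_nat_times deriv_part)
      (simp del: of_nat_Suc add: field_simps)
qed

lemma sum_fun_upd_outside: "x \<notin> A \<Longrightarrow> sum (f(x := y)) A = sum f A"
  by (rule sum.cong) auto

definition suffix_bounded_tuples :: "nat \<Rightarrow> nat \<Rightarrow> nat \<Rightarrow> (nat \<Rightarrow> nat) set" where
  "suffix_bounded_tuples lo m s = {n.
     (\<forall>j. j \<notin> {lo..<lo+m} \<longrightarrow> n j = 0) \<and> (\<Sum>k\<in>{lo..<lo+m}. n k) = s \<and>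
     (\<forall>j\<in>{lo..<lo+m}. (\<Sum>k\<in>{j..<lo+m}. n k) \<le> lo + m - j)}"

lemma mem_suffix_bounded_tuples_Suc:
  "n \<in> suffix_bounded_tuples lo (Suc m) s \<longleftrightarrow>
     s \<le> Suc m \<and> n lo \<le> s \<and> n(lo := 0) \<in> suffix_bounded_tuples (Suc lo) m (s - n lo)"
proof -
  define I U where "I = {lo..<lo + Suc m}" and "U = {Suc lo..<Suc lo + m}"
  have I_eq: "I = insert lo U" and lo_notin: "lo \<notin> U"
    by (auto simp: I_def U_def)
  have support:
    "(\<forall>j. j \<notin> I \<longrightarrow> n j = 0) \<longleftrightarrow> (\<forall>j. j \<notin> U \<longrightarrow> (n(lo := 0)) j = 0)"
    by (auto simp: I_eq)
  have total: "sum n I = n lo + sum (n(lo := 0)) U"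
    by (simp add: I_eq lo_notin sum_fun_upd_outside U_def)
  have suffix: "(\<forall>j\<in>I. (\<Sum>k\<in>{j..<lo + Suc m}. n k) \<le> lo + Suc m - j) \<longleftrightarrow>
      sum n I \<le> Suc m \<and>
      (\<forall>j\<in>U. (\<Sum>k\<in>{j..<Suc lo + m}. (n(lo := 0)) k) \<le> Suc lo + m - j)"
  proof -
    have first: "(\<Sum>k\<in>{lo..<lo + Suc m}. n k) \<le> lo + Suc m - lo \<longleftrightarrow> sum n I \<le> Suc m"
      by (simp only: I_def diff_add_inverse)
    have rest: "(\<Sum>k\<in>{j..<lo + Suc m}. n k) \<le> lo + Suc m - j \<longleftrightarrow>
        (\<Sum>k\<in>{j..<Suc lo + m}. (n(lo := 0)) k) \<le> Suc lo + m - j" if "j \<in> U" for j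
      using that by (simp add: U_def sum_fun_upd_outside)
    show ?thesis
      using first rest unfolding I_eq ball_simps by blast
  qed
  show ?thesis
    unfolding suffix_bounded_tuples_def mem_Collect_eq I_def[symmetric] U_def[symmetric]
      support suffix total
    by (auto simp: U_def)
qed

lemma suffix_bounded_tuples_0:
  "suffix_bounded_tuples lo 0 s = (if s = 0 then {\<lambda>_. 0} else {})"
  by (auto simp: suffix_bounded_tuples_def)

lemma suffix_bounded_tuples_eq_empty: "m < s \<Longrightarrow> suffix_bounded_tuples lo m s = {}"
  by (cases m) (auto simp: suffix_bounded_tuples_0 mem_suffix_bounded_tuples_Suc)

lemma suffix_bounded_tuples_outside:
  "n \<in> suffix_bounded_tuples lo m s \<Longrightarrow> j \<notin> {lo..<lo+m} \<Longrightarrow> n j = 0"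
  by (simp add: suffix_bounded_tuples_def)

lemma suffix_bounded_tuples_Suc:
  assumes "s \<le> Suc m"
  shows "suffix_bounded_tuples lo (Suc m) s =
    (\<lambda>(a, n). n(lo := a)) ` (SIGMA a:{..s}. suffix_bounded_tuples (Suc lo) m (s - a))"
    (is "_ = _ ` ?S")
proof (intro set_eqI iffI)
  fix n assume "n \<in> suffix_bounded_tuples lo (Suc m) s"
  then have "(n lo, n(lo := 0)) \<in> ?S"
    by (simp add: mem_suffix_bounded_tuples_Suc)
  then show "n \<in> (\<lambda>(a, n). n(lo := a)) ` ?S"
    by (rule rev_image_eqI) simp
next
  fix n assume "n \<in> (\<lambda>(a, n). n(lo := a)) ` ?S"
  then obtain a n' where n: "n = n'(lo := a)" and "a \<le> s"
    and n': "n' \<in> suffix_bounded_tuples (Suc lo) m (s - a)"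
    by auto
  have "n'(lo := 0) = n'"
    using suffix_bounded_tuples_outside[OF n', of lo] by auto
  then show "n \<in> suffix_bounded_tuples lo (Suc m) s"
    using assms \<open>a \<le> s\<close> n' by (simp add: n mem_suffix_bounded_tuples_Suc)
qed

lemma inj_on_fun_upd_suffix_bounded_tuples:
  "inj_on (\<lambda>(a, n). n(lo := a)) (SIGMA a:A. suffix_bounded_tuples (Suc lo) m (t a))"
proof (rule inj_onI, clarsimp)
  fix a b n n'
  assume "n \<in> suffix_bounded_tuples (Suc lo) m (t a)"
    and "n' \<in> suffix_bounded_tuples (Suc lo) m (t b)"
    and eq: "n(lo := a) = n'(lo := b)"
  then have "n lo = 0" "n' lo = 0"
    by (auto intro: suffix_bounded_tuples_outside)
  moreover have "a = b"
    using fun_cong[OF eq, of lo] by simp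
  ultimately show "a = b \<and> n = n'"
    using eq by (metis fun_upd_triv fun_upd_upd)
qed

lemma finite_suffix_bounded_tuples: "finite (suffix_bounded_tuples lo m s)"
proof (induction m arbitrary: lo s)
  case 0
  then show ?case by (simp add: suffix_bounded_tuples_0)
next
  case (Suc m)
  then show ?case
    by (cases "s \<le> Suc m")
      (simp_all add: suffix_bounded_tuples_Suc suffix_bounded_tuples_eq_empty)
qed

definition suffix_bounded_sum :: "'a::comm_semiring_1 fps \<Rightarrow> nat \<Rightarrow> nat \<Rightarrow> nat \<Rightarrow> 'a"
  where "suffix_bounded_sum f lo m s =
    (\<Sum>n\<in>suffix_bounded_tuples lo m s. \<Prod>k\<in>{lo..<lo+m}. f $ n k)"

lemma suffix_bounded_sum_0: "suffix_bounded_sum f lo 0 s = (if s = 0 then 1 else 0)"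
  by (simp add: suffix_bounded_sum_def suffix_bounded_tuples_0)

lemma suffix_bounded_sum_eq_0: "m < s \<Longrightarrow> suffix_bounded_sum f lo m s = 0"
  by (simp add: suffix_bounded_sum_def suffix_bounded_tuples_eq_empty)

lemma suffix_bounded_sum_Suc:
  assumes "s \<le> Suc m"
  shows "suffix_bounded_sum f lo (Suc m) s =
    (\<Sum>a\<le>s. f $ a * suffix_bounded_sum f (Suc lo) m (s - a))"
proof -
  have prod_upd: "(\<Prod>k\<in>{lo..<lo + Suc m}. f $ (n(lo := a)) k) =
      f $ a * (\<Prod>k\<in>{Suc lo..<Suc lo + m}. f $ n k)"
    for n :: "nat \<Rightarrow> nat" and a
  proof -
    have "(\<Prod>k\<in>{lo..<lo + Suc m}. f $ (n(lo := a)) k) =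
        f $ a * (\<Prod>k\<in>{Suc lo..<lo + Suc m}. f $ (n(lo := a)) k)"
      by (subst prod.atLeast_Suc_lessThan) simp_all
    also have "(\<Prod>k\<in>{Suc lo..<lo + Suc m}. f $ (n(lo := a)) k) =
        (\<Prod>k\<in>{Suc lo..<Suc lo + m}. f $ n k)"
      by (rule prod.cong) auto
    finally show ?thesis .
  qed
  have "suffix_bounded_sum f lo (Suc m) s =
      (\<Sum>(a, n)\<in>(SIGMA a:{..s}. suffix_bounded_tuples (Suc lo) m (s - a)).
         \<Prod>k\<in>{lo..<lo + Suc m}. f $ (n(lo := a)) k)"
    unfolding suffix_bounded_sum_def suffix_bounded_tuples_Suc[OF assms]
    by (subst sum.reindex[OF inj_on_fun_upd_suffix_bounded_tuples]) (simp add: case_prod_unfold)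
  also have "\<dots> = (\<Sum>a\<le>s. \<Sum>n\<in>suffix_bounded_tuples (Suc lo) m (s - a).
         f $ a * (\<Prod>k\<in>{Suc lo..<Suc lo + m}. f $ n k))"
    unfolding prod_upd by (rule sum.Sigma[symmetric]) (simp_all add: finite_suffix_bounded_tuples)
  also have "\<dots> = (\<Sum>a\<le>s. f $ a * suffix_bounded_sum f (Suc lo) m (s - a))"
    by (simp add: suffix_bounded_sum_def sum_distrib_left)
  finally show ?thesis .
qed

lemma suffix_bounded_sum_eq:
  fixes f :: "'a::field_char_0 fps"
  assumes f0: "f $ 0 = 1" and "s \<le> m"
  shows "suffix_bounded_sum f lo m s =
    (of_nat (Suc m) - of_nat s) / of_nat (Suc m) * (f ^ Suc m) $ s"
  using assms(2)
proof (induction m arbitrary: lo s)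
  case 0
  then show ?case by (simp add: suffix_bounded_sum_0 f0)
next
  case (Suc m)
  define N where "N = Suc m"
  have N_nz: "N \<noteq> 0"
    by (simp add: N_def)
  have step: "suffix_bounded_sum f (Suc lo) m t = (of_nat N - of_nat t) / of_nat N * (f ^ N) $ t"
    if "t \<le> N" for t
  proof (cases "t \<le> m")
    case True
    then show ?thesis by (simp add: Suc.IH N_def)
  next
    case False
    with that have "t = N" by (simp add: N_def)
    then show ?thesis by (simp add: suffix_bounded_sum_eq_0 N_def)
  qed
  have "suffix_bounded_sum f lo (Suc m) s =
      (\<Sum>a\<le>s. f $ a * ((of_nat N - of_nat (s - a)) / of_nat N * (f ^ N) $ (s - a)))"
    using Suc.prems by (simp add: suffix_bounded_sum_Suc step N_def)
  also have "\<dots> =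
      (\<Sum>a\<le>s. f $ a * (of_nat N * f ^ N - fps_X * fps_deriv (f ^ N)) $ (s - a)) / of_nat N"
  proof -
    have kernel_nth:
      "(of_nat N * f ^ N - fps_X * fps_deriv (f ^ N)) $ t = (of_nat N - of_nat t) * (f ^ N) $ t" for t
      by (simp only: fps_sub_nth fps_nth_of_nat_times fps_X_times_deriv_nth left_diff_distrib)
    show ?thesis
      by (simp only: kernel_nth sum_divide_distrib times_divide_eq_left times_divide_eq_right)
  qed
  also have "\<dots> = (f * (of_nat N * f ^ N - fps_X * fps_deriv (f ^ N))) $ s / of_nat N"
    by (simp only: fps_mult_nth atLeast0AtMost)
  also have "\<dots> = (of_nat (Suc N) - of_nat s) / of_nat (Suc N) * (f ^ Suc N) $ s"
    by (simp only: fps_nth_times_power_minus_deriv) (simp add: N_nz)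
  finally show ?case by (simp only: N_def)
qed

lemma bernoulli_egf_times: "bernoulli_egf * (fps_exp 1 - 1) = fps_X * fps_exp 1"
proof -
  have "subdegree (fps_exp (1::real) - 1) = 1"
    by (rule subdegreeI) auto
  then show ?thesis
    unfolding bernoulli_egf_def by (intro fps_times_divide_eq) auto
qed

lemma bernoulli_egf_nth_0: "bernoulli_egf $ 0 = 1"
  using arg_cong[OF bernoulli_egf_times, of "\<lambda>f. f $ 1"]
  by (simp add: fps_mult_nth)

lemma bernoulli_egf_deriv:
  "fps_X * fps_deriv bernoulli_egf = bernoulli_egf * (1 + fps_X - bernoulli_egf)"
proof -
  define E :: "real fps" where "E = fps_exp 1"
  have prod: "bernoulli_egf * (E - 1) = fps_X * E"
    by (simp add: E_def bernoulli_egf_times)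
  have "(E - 1) $ 1 \<noteq> 0"
    by (simp add: E_def)
  then have "E - 1 \<noteq> 0"
    by auto
  have deriv: "fps_deriv bernoulli_egf * (E - 1) = E + fps_X * E - bernoulli_egf * E"
    using arg_cong[OF prod, of fps_deriv] by (simp add: E_def algebra_simps)
  have "(fps_X * fps_deriv bernoulli_egf) * (E - 1) = fps_X * (fps_deriv bernoulli_egf * (E - 1))"
    by (simp only: mult.assoc)
  also have "\<dots> = fps_X * E + fps_X * (fps_X * E) - bernoulli_egf * (fps_X * E)"
    by (simp only: deriv) (simp add: algebra_simps)
  also have "\<dots> = (1 + fps_X - bernoulli_egf) * (bernoulli_egf * (E - 1))"
    by (simp only: prod) (simp add: algebra_simps)
  also have "\<dots> = (bernoulli_egf * (1 + fps_X - bernoulli_egf)) * (E - 1)"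
    by (simp only: ac_simps)
  finally show ?thesis
    using \<open>E - 1 \<noteq> 0\<close> by simp
qed

lemma bernoulli_div_fact: "bernoulli n / fact n = bernoulli_egf $ n"
  by (simp add: bernoulli_def)

lemma suffix_condition_shift:
  fixes r :: nat and n :: "nat \<Rightarrow> nat"
  shows "(\<forall>j\<in>{1..<1+r}. (\<Sum>k\<in>{j..<1+r}. n k) \<le> 1 + r - j) \<longleftrightarrow>
     (\<Sum>k=1..r. n k) \<le> r \<and> (\<forall>j. 1 \<le> j \<and> j < r \<longrightarrow> (\<Sum>k=j+1..r. n k) \<le> r - j)"
    (is "(\<forall>j\<in>_. ?P j) \<longleftrightarrow> ?Q")
proof -
  have ivl: "{j..<1+r} = {j..r}" for j
    by auto
  have shift: "?P (i + 1) \<longleftrightarrow> (\<Sum>k=i+1..r. n k) \<le> r - i" for i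
  proof -
    have "1 + r - (i + 1) = r - i"
      by simp
    then show ?thesis
      by (simp only: ivl)
  qed
  show ?thesis
  proof
    assume H: "\<forall>j\<in>{1..<1+r}. ?P j"
    have "(\<Sum>k=1..r. n k) \<le> r"
    proof (cases "r = 0")
      case False
      then have "1 \<in> {1..<1+r}"
        by simp
      with H have "?P 1" ..
      then show ?thesis
        by (simp only: ivl add_diff_cancel_left')
    qed simp
    moreover have "(\<Sum>k=j+1..r. n k) \<le> r - j" if "1 \<le> j" "j < r" for j
    proof -
      have "j + 1 \<in> {1..<1+r}"
        using that by simp
      with H have "?P (j + 1)" ..
      then show ?thesis
        by (simp only: shift)
    qed
    ultimately show ?Q
      by blast
  next
    assume Q: ?Q
    show "\<forall>j\<in>{1..<1+r}. ?P j"
    proof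
      fix j assume j: "j \<in> {1..<1+r}"
      show "?P j"
      proof (cases "j = 1")
        case True
        then show ?thesis
          using Q by (simp only: ivl add_diff_cancel_left')
      next
        case False
        with j have "j = (j - 1) + 1" "1 \<le> j - 1" "j - 1 < r"
          by auto
        then show ?thesis
          using Q shift[of "j - 1"] by metis
      qed
    qed
  qed
qed

lemma Cset_index_1_eq: "Cset_index 1 r = suffix_bounded_tuples 1 r r"
proof -
  have "{1..<1+r} = {1..r}"
    by auto
  then show ?thesis
    unfolding Cset_index_def suffix_bounded_tuples_def tuples_def suffix_condition_shift
    by auto
qed

theorem lemma3p1:
  fixes r :: nat
  assumes "r \<ge> 1"
  shows "C_ir 1 r = (-1) ^ r / real (r + 1)"
proof -
  have "C_ir 1 r = (-1) ^ r * suffix_bounded_sum bernoulli_egf 1 r r"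
    unfolding C_ir_def Cset_def Cset_index_1_eq suffix_bounded_sum_def bernoulli_div_fact
    by (simp add: atLeastLessThanSuc_atLeastAtMost)
  also have "suffix_bounded_sum bernoulli_egf 1 r r = 1 / real (r + 1)"
    using fps_nth_power_Suc_self[OF bernoulli_egf_nth_0 bernoulli_egf_deriv, of r]
    by (simp add: suffix_bounded_sum_eq bernoulli_egf_nth_0)
  finally show ?thesis by simp
qed

end
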